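(* Let $n\ge m\ge 1$ be integers, $N=nm+n+m$, and $d\in\{1,-1\}$. Put $s_1=m(m+3)/2$ and $s_2=(n-m)(m+1)$, and define integers $x_1,\dots,x_N$ recursively as follows. For $1\le i\le s_1$, with $\alpha=\lfloor\frac{\sqrt{8i+1}-1}{2}\rfloor$, $$x_i=n+1-(-1)^{\alpha}d\,(2i-\alpha(\alpha+2)).$$ For $s_1+1\le i\le s_1+s_2$, with $\beta=\lfloor\frac{i-s_1+m}{m+1}\rfloor$ and $p=i-s_1-(\beta-1)(m+1)$, $$x_i=x_{s_1}-\beta-(-1)^{m+\beta}d\,\bigl(2p-2-m(1+(-1)^{\beta})\bigr).$$ For $s_1+s_2+1\le i\le N$, with $\gamma=\lfloor m-\sqrt{m(m+1)-2(i-s_1-s_2)+9/4}+3/2\rfloor$ and $q=i-s_1-s_2-(\gamma-1)(m+1)+\gamma(\gamma-1)/2$, $$x_i=x_{s_1+s_2}-d\bigl((-1)^{n+\gamma}(\gamma+2q-m-2)-m(-1)^n\bigr).$$ Then starting from the initial configuration $b^nOw^m$ and, for $i=1,\dots,N$, moving in step $i$ the checker at position $x_i$ into the current vacancy, every step is a legal move, the final configuration $w^mOb^n$ is reached after step $N$, and hence this is an optimal move sequence (of the minimum possible length $nm+n+m$). Moreover $d=(n+1)-x_1$ is the direction of the first move.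
   Context: The game: positions $1,\dots,n+m+1$ in a row, each holding a black checker ($b$), a white checker ($w$) or nothing, with exactly one empty position (the vacancy $O$). Initial configuration $b^nOw^m$ (vacancy at position $n+1$), final configuration $w^mOb^n$. A legal move is a slide (a checker adjacent to the vacancy moves into it) or a jump (a checker at distance two from the vacancy jumps over the checker between them into it); after moving the checker at position $x_i$, position $x_i$ becomes the new vacancy. *)

theory Defs
  imports Complex_Main
begin

datatype cell = Black | White | Empty

text \<open>A configuration assigns a cell content to every integer position; only the positions
  1..L (L = n+m+1) are part of the board, all other positions are Empty and never touched.\<close>
type_synonym config = "int \<Rightarrow> cell"

definition init_conf :: "nat \<Rightarrow> nat \<Rightarrow> config" where
  "init_conf n m p = (if 1 \<le> p \<and> p \<le> int n then Black
     else if p = int n + 1 then Empty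
     else if int n + 1 < p \<and> p \<le> int n + int m + 1 then White
     else Empty)"

definition final_conf :: "nat \<Rightarrow> nat \<Rightarrow> config" where
  "final_conf n m p = (if 1 \<le> p \<and> p \<le> int m then White
     else if p = int m + 1 then Empty
     else if int m + 1 < p \<and> p \<le> int n + int m + 1 then Black
     else Empty)"

definition vacancy :: "int \<Rightarrow> config \<Rightarrow> int" where
  "vacancy L c = (THE v. 1 \<le> v \<and> v \<le> L \<and> c v = Empty)"

definition legal_move :: "int \<Rightarrow> config \<Rightarrow> int \<Rightarrow> bool" where
  "legal_move L c x \<longleftrightarrow>
     (\<exists>!v. 1 \<le> v \<and> v \<le> L \<and> c v = Empty) \<and>
     1 \<le> x \<and> x \<le> L \<and> c x \<noteq> Empty \<and>
     (let v = vacancy L c in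
        \<bar>x - v\<bar> = 1 \<or> (\<bar>x - v\<bar> = 2 \<and> c ((x + v) div 2) \<noteq> Empty))"

definition apply_move :: "int \<Rightarrow> config \<Rightarrow> int \<Rightarrow> config" where
  "apply_move L c x = (c(vacancy L c := c x)) (x := Empty)"

fun legal_seq :: "int \<Rightarrow> config \<Rightarrow> int list \<Rightarrow> bool" where
  "legal_seq L c [] = True"
| "legal_seq L c (x # xs) = (legal_move L c x \<and> legal_seq L (apply_move L c x) xs)"

definition run_moves :: "int \<Rightarrow> config \<Rightarrow> int list \<Rightarrow> config" where
  "run_moves L c xs = foldl (apply_move L) c xs"

definition s1 :: "nat \<Rightarrow> int" where "s1 m = int m * (int m + 3) div 2"
definition s2 :: "nat \<Rightarrow> nat \<Rightarrow> int" where "s2 n m = (int n - int m) * (int m + 1)"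

definition xA :: "nat \<Rightarrow> int \<Rightarrow> int \<Rightarrow> int" where
  "xA n d i = (let \<alpha> = \<lfloor>(sqrt (8 * real_of_int i + 1) - 1) / 2\<rfloor> in
     int n + 1 - (-1) ^ nat \<alpha> * d * (2 * i - \<alpha> * (\<alpha> + 2)))"

definition xB :: "nat \<Rightarrow> nat \<Rightarrow> int \<Rightarrow> int \<Rightarrow> int" where
  "xB n m d i = (if i \<le> s1 m then xA n d i else
     (let \<beta> = (i - s1 m + int m) div (int m + 1);
          p = i - s1 m - (\<beta> - 1) * (int m + 1) in
      xA n d (s1 m) - \<beta> - (-1) ^ nat (int m + \<beta>) * d * (2 * p - 2 - int m * (1 + (-1) ^ nat \<beta>))))"

definition xC :: "nat \<Rightarrow> nat \<Rightarrow> int \<Rightarrow> int \<Rightarrow> int" where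
  "xC n m d i = (if i \<le> s1 m + s2 n m then xB n m d i else
     (let k = i - s1 m - s2 n m;
          \<gamma> = \<lfloor>real m - sqrt (real m * (real m + 1) - 2 * real_of_int k + 9 / 4) + 3 / 2\<rfloor>;
          q = k - (\<gamma> - 1) * (int m + 1) + \<gamma> * (\<gamma> - 1) div 2 in
      xB n m d (s1 m + s2 n m)
        - d * ((-1) ^ nat (int n + \<gamma>) * (\<gamma> + 2 * q - int m - 2) - int m * (-1) ^ n)))"

definition move_seq :: "nat \<Rightarrow> nat \<Rightarrow> int \<Rightarrow> int list" where
  "move_seq n m d = map (xC n m d) [1 .. int (n * m + n + m)]"

end

theory Submission
  imports Defs
begin

text \<open>The prescribed moves form sweeps: a slide followed by a run of jumps in one direction.
  Between sweeps the board reads \<open>X\<dots>X\<close>, then an alternating block \<open>w b w \<dots> b\<close> with the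
  vacancy at one of its ends, then \<open>Y\<dots>Y\<close>. The three closed formulas for \<open>x\<^sub>i\<close> are three
  phases: \<open>m\<close> sweeps grow the block (from \<open>b\<^sup>n O w\<^sup>m\<close>) to length \<open>2m + 1\<close>, \<open>n - m\<close> sweeps
  shift it one cell to the left, and \<open>m\<close> sweeps shrink it again (ending at \<open>w\<^sup>m O b\<^sup>n\<close>); the
  direction of each sweep alternates and is read off the sign in the formula.

  Optimality is a potential argument. The moment \<open>\<Sum> \<plusminus>p\<close> (sign \<open>+\<close> for black checkers)
  rises by \<open>2nm + n + m\<close>, the difference of the last positions of black and white in the word
  with the vacancy deleted, suitably rounded, rises by \<open>n + m\<close>, and no move raises the sum of the
  two by more than two.\<close>

section \<open>Boards with a single vacancy\<close>

definition single_vacancy :: "int \<Rightarrow> config \<Rightarrow> int \<Rightarrow> bool" where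
  "single_vacancy L c v \<longleftrightarrow> 1 \<le> v \<and> v \<le> L \<and> c v = Empty
     \<and> (\<forall>p. 1 \<le> p \<and> p \<le> L \<and> p \<noteq> v \<longrightarrow> c p \<noteq> Empty) \<and> (\<forall>p. p < 1 \<or> L < p \<longrightarrow> c p = Empty)"

definition reaches :: "int \<Rightarrow> config \<Rightarrow> int list \<Rightarrow> config \<Rightarrow> bool" where
  "reaches L c xs c' \<longleftrightarrow> legal_seq L c xs \<and> run_moves L c xs = c'"

lemma vacancy_eq: "single_vacancy L c v \<Longrightarrow> vacancy L c = v"
  unfolding vacancy_def single_vacancy_def by (rule the_equality) auto

lemma legal_move_near_vacancy:
  assumes "single_vacancy L c v" "1 \<le> x" "x \<le> L" "\<bar>x - v\<bar> = 1 \<or> \<bar>x - v\<bar> = 2"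
  shows "legal_move L c x"
proof -
  have v: "1 \<le> v" "v \<le> L" using assms(1) unfolding single_vacancy_def by auto
  have "\<bar>x - v\<bar> = 2 \<Longrightarrow> (x + v) div 2 \<noteq> v \<and> 1 \<le> (x + v) div 2 \<and> (x + v) div 2 \<le> L"
    using assms(2,3) v by auto
  moreover have "x \<noteq> v" using assms(4) by auto
  ultimately show ?thesis
    using assms unfolding legal_move_def Let_def vacancy_eq[OF assms(1)] single_vacancy_def by auto
qed

lemma apply_move_eq:
  "single_vacancy L c v \<Longrightarrow> apply_move L c x = (c(v := c x))(x := Empty)"
  unfolding apply_move_def by (simp only: vacancy_eq)

lemma single_vacancy_apply_move:
  assumes "single_vacancy L c v" "1 \<le> x" "x \<le> L" "x \<noteq> v"
  shows "single_vacancy L (apply_move L c x) x"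
  using assms unfolding apply_move_eq[OF assms(1)] single_vacancy_def by auto

lemma run_moves_Nil [simp]: "run_moves L c [] = c"
  by (simp add: run_moves_def)

lemma run_moves_Cons: "run_moves L c (x # xs) = run_moves L (apply_move L c x) xs"
  by (simp add: run_moves_def)

lemma reaches_Nil [simp]: "reaches L c [] c' \<longleftrightarrow> c' = c"
  by (auto simp: reaches_def)

lemma reaches_Cons_iff: "reaches L c (x # xs) c' \<longleftrightarrow> legal_move L c x \<and> reaches L (apply_move L c x) xs c'"
  by (simp add: reaches_def run_moves_Cons)

lemma reaches_append: "reaches L c xs c1 \<Longrightarrow> reaches L c1 ys c2 \<Longrightarrow> reaches L c (xs @ ys) c2"
  by (induction xs arbitrary: c) (auto simp: reaches_Cons_iff)

lemma reaches_snoc: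
  "reaches L c xs c1 \<Longrightarrow> legal_move L c1 x \<Longrightarrow> reaches L c (xs @ [x]) (apply_move L c1 x)"
  by (rule reaches_append) (auto simp: reaches_Cons_iff)

section \<open>Sweeps across an alternating block\<close>

definition sweep :: "int \<Rightarrow> int \<Rightarrow> nat \<Rightarrow> int list" where
  "sweep x t K = map (\<lambda>j. x + 2 * t * int j) [0..<Suc K]"

text \<open>The configuration after the sweep: the checker from \<open>x\<close> has slid into the old vacancy
  \<open>v\<close>, every later checker has jumped back by two cells into the previous one, and the last
  start position is the new vacancy.\<close>
definition sweep_result :: "config \<Rightarrow> int \<Rightarrow> int \<Rightarrow> int \<Rightarrow> nat \<Rightarrow> config" where
  "sweep_result c v x t K p =
     (if p = v then c x else if p = x + 2 * t * int K then Empty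
      else if (\<exists>j<K. p = x + 2 * t * int j) then c (p + 2 * t) else c p)"

lemma sweep_Suc: "sweep x t (Suc K) = sweep x t K @ [x + 2 * t * int (Suc K)]"
  unfolding sweep_def by simp

lemma reaches_sweep:
  assumes vac: "single_vacancy L c v" and slide: "\<bar>x - v\<bar> = 1" and t: "t = 1 \<or> t = -1"
    and inside: "\<And>j. j \<le> K \<Longrightarrow> 1 \<le> x + 2 * t * int j \<and> x + 2 * t * int j \<le> L"
  shows "reaches L c (sweep x t K) (sweep_result c v x t K)
    \<and> single_vacancy L (sweep_result c v x t K) (x + 2 * t * int K)"
  using inside
proof (induction K)
  case 0
  have "1 \<le> x" "x \<le> L" "x \<noteq> v" using 0[of 0] slide by auto
  moreover have "sweep_result c v x t 0 = apply_move L c x"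
    unfolding apply_move_eq[OF vac] sweep_result_def using \<open>x \<noteq> v\<close> by (auto simp: fun_eq_iff)
  ultimately show ?case
    using legal_move_near_vacancy[OF vac] single_vacancy_apply_move[OF vac] slide
    by (simp add: sweep_def reaches_Cons_iff)
next
  case (Suc K)
  let ?x = "\<lambda>j::nat. x + 2 * t * int j"
  let ?c = "sweep_result c v x t K"
  have IH: "reaches L c (sweep x t K) ?c" "single_vacancy L ?c (?x K)" using Suc by auto
  have in_board: "1 \<le> ?x (Suc K)" "?x (Suc K) \<le> L" using Suc.prems[of "Suc K"] by auto
  have x_inj: "?x i = ?x j \<longleftrightarrow> i = j" for i j using t by auto
  have jump: "\<bar>?x (Suc K) - ?x K\<bar> = 2" using t by auto
  have x_ne_v: "?x j \<noteq> v" for j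
  proof
    assume "?x j = v"
    then have "v - x = 2 * (t * int j)" by simp
    then show False using slide by presburger
  qed
  then have "?c (?x (Suc K)) = c (?x (Suc K))"
    unfolding sweep_result_def using x_inj x_ne_v[of "Suc K"] by auto
  then have "apply_move L ?c (?x (Suc K)) = sweep_result c v x t (Suc K)"
    unfolding apply_move_eq[OF IH(2)] sweep_result_def fun_eq_iff
    using x_inj x_ne_v[of K] x_ne_v[of "Suc K"] by (auto simp: less_Suc_eq algebra_simps)
  moreover have "legal_move L ?c (?x (Suc K))"
    using legal_move_near_vacancy[OF IH(2) in_board] jump by simp
  moreover have "?x (Suc K) \<noteq> ?x K" using x_inj[of "Suc K" K] by simp
  ultimately show ?case
    using reaches_snoc[OF IH(1)] single_vacancy_apply_move[OF IH(2) in_board] sweep_Suc by metis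
qed

lemma sweep_result_eq:
  assumes "t = 1 \<or> t = -1"
  shows "sweep_result c v x t K p =
    (if p = v then c x else if p = x + 2 * t * int K then Empty
     else if even (p - x) \<and> 0 \<le> t * (p - x) \<and> t * (p - x) < 2 * int K then c (p + 2 * t) else c p)"
proof -
  have "(\<exists>j<K. p = x + 2 * t * int j) \<longleftrightarrow> even (p - x) \<and> 0 \<le> t * (p - x) \<and> t * (p - x) < 2 * int K"
  proof
    assume "even (p - x) \<and> 0 \<le> t * (p - x) \<and> t * (p - x) < 2 * int K"
    moreover obtain q where "t * (p - x) = 2 * q"
      using calculation by (metis dvd_mult evenE)
    ultimately show "\<exists>j<K. p = x + 2 * t * int j"
      using assms by (intro exI[of _ "nat q"]) auto
  qed (use assms in auto)
  then show ?thesis unfolding sweep_result_def by simp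
qed

lemma reaches_sweep_to:
  assumes "single_vacancy L c v" "\<bar>x - v\<bar> = 1" "t = 1 \<or> t = -1"
    and "\<And>j. j \<le> K \<Longrightarrow> 1 \<le> x + 2 * t * int j \<and> x + 2 * t * int j \<le> L"
    and "sweep_result c v x t K = c'"
  shows "reaches L c (sweep x t K) c'"
  using reaches_sweep[where K = K, OF assms(1-4)] assms(5) by simp

text \<open>The \<open>2k + 1\<close> cells starting at \<open>b\<close> read \<open>O w b w b \<dots> w b\<close> if \<open>vl\<close> and
  \<open>w b w b \<dots> w b O\<close> otherwise.\<close>
definition block :: "int \<Rightarrow> int \<Rightarrow> int \<Rightarrow> bool \<Rightarrow> cell \<Rightarrow> cell \<Rightarrow> config" where
  "block L b k vl X Y p =
     (if p < 1 \<or> p > L then Empty else if p < b then X else if p > b + 2 * k then Y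
      else if vl then (if p = b then Empty else if even (p - b) then Black else White)
      else (if p = b + 2 * k then Empty else if even (p - b) then White else Black))"

lemma single_vacancy_block:
  "1 \<le> b \<Longrightarrow> b + 2 * k \<le> L \<Longrightarrow> 0 \<le> k \<Longrightarrow> X \<noteq> Empty \<Longrightarrow> Y \<noteq> Empty \<Longrightarrow>
    single_vacancy L (block L b k vl X Y) (if vl then b else b + 2 * k)"
  unfolding single_vacancy_def block_def by auto

lemma init_conf_block: "init_conf n m = block (int n + int m + 1) (int n + 1) 0 vl Black White"
  unfolding init_conf_def block_def fun_eq_iff by auto

lemma final_conf_block: "final_conf n m = block (int n + int m + 1) (int m + 1) 0 vl White Black"
  unfolding final_conf_def block_def fun_eq_iff by auto

lemma block_right_end: "b + 2 * k = L \<Longrightarrow> block L b k vl X Y = block L b k vl X Y'"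
  unfolding block_def fun_eq_iff by auto

lemma block_left_end: "b = 1 \<Longrightarrow> block L b k vl X Y = block L b k vl X' Y"
  unfolding block_def fun_eq_iff by auto

lemma reaches_block_grow:
  assumes "2 \<le> b" "b + 2 * k + 1 \<le> L" "0 \<le> k" "e = 1 \<or> e = -1"
  shows "reaches L (block L b k (e = 1) Black White) (sweep (b + k - e * (k + 1)) e (nat (k + 1)))
    (block L (b - 1) (k + 1) (e = -1) Black White)"
  using assms(4)
proof
  assume e: "e = 1"
  show ?thesis unfolding e
    by (intro reaches_sweep_to[OF single_vacancy_block[of b k L Black White]])
      (use assms in \<open>auto simp: sweep_result_eq fun_eq_iff block_def, (presburger+)?\<close>)
next
  assume e: "e = -1"
  show ?thesis unfolding e
    by (intro reaches_sweep_to[OF single_vacancy_block[of b k L Black White]])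
      (use assms in \<open>auto simp: sweep_result_eq fun_eq_iff block_def, (presburger+)?\<close>)
qed

lemma reaches_block_shift:
  assumes "2 \<le> b" "b + 2 * k \<le> L" "0 \<le> k" "e = 1 \<or> e = -1"
  shows "reaches L (block L b k (e = 1) Black Black) (sweep (b + k - 1 - e * k) e (nat k))
    (block L (b - 1) k (e = -1) Black Black)"
  using assms(4)
proof
  assume e: "e = 1"
  show ?thesis unfolding e
    by (intro reaches_sweep_to[OF single_vacancy_block[of b k L Black Black]])
      (use assms in \<open>auto simp: sweep_result_eq fun_eq_iff block_def, (presburger+)?\<close>)
next
  assume e: "e = -1"
  show ?thesis unfolding e
    by (intro reaches_sweep_to[OF single_vacancy_block[of b k L Black Black]])
      (use assms in \<open>auto simp: sweep_result_eq fun_eq_iff block_def, (presburger+)?\<close>)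
qed

lemma reaches_block_shrink:
  assumes "1 \<le> b" "b + 2 * k \<le> L" "1 \<le> k" "e = 1 \<or> e = -1"
  shows "reaches L (block L b k (e = 1) White Black) (sweep (b + k - e * (k - 1)) e (nat (k - 1)))
    (block L (b + 1) (k - 1) (e = -1) White Black)"
  using assms(4)
proof
  assume e: "e = 1"
  show ?thesis unfolding e
    by (intro reaches_sweep_to[OF single_vacancy_block[of b k L White Black]])
      (use assms in \<open>auto simp: sweep_result_eq fun_eq_iff block_def, (presburger+)?\<close>)
next
  assume e: "e = -1"
  show ?thesis unfolding e
    by (intro reaches_sweep_to[OF single_vacancy_block[of b k L White Black]])
      (use assms in \<open>auto simp: sweep_result_eq fun_eq_iff block_def, (presburger+)?\<close>)
qed

section \<open>The three phases of the move sequence\<close>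

lemma reaches_upto_extend:
  assumes "reaches L c (map F [1..A]) c1" "0 \<le> A"
    and "\<And>j. j \<le> K \<Longrightarrow> F (A + 1 + int j) = x + 2 * t * int j"
    and "reaches L c1 (sweep x t K) c2"
  shows "reaches L c (map F [1..A + 1 + int K]) c2"
proof -
  have sweep_part: "map F [A + 1..A + 1 + int K] = sweep x t K"
  proof (rule nth_equalityI)
    fix i assume "i < length (map F [A + 1..A + 1 + int K])"
    then have "i \<le> K" by simp
    then show "map F [A + 1..A + 1 + int K] ! i = sweep x t K ! i"
      using assms(3)[of i] by (simp add: sweep_def nth_upto del: upt_Suc)
  qed (simp add: sweep_def)
  have "[1..A + 1 + int K] = [1..A] @ [A + 1..A + 1 + int K]"
    using upto_split1[of 1 "A + 1" "A + 1 + int K"] assms(2) by simp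
  then show ?thesis
    using reaches_append[OF assms(1,4)] unfolding sweep_part[symmetric] by simp
qed

lemma floor_inverse_triangular:
  fixes a j i :: int
  assumes "0 \<le> j" "j \<le> a" "2 * i = a * (a + 1) + 2 * j"
  shows "\<lfloor>(sqrt (8 * real_of_int i + 1) - 1) / 2\<rfloor> = a"
proof -
  have i: "8 * real_of_int i + 1 = real_of_int (4 * a * a + 4 * a + 8 * j + 1)"
    using arg_cong[OF assms(3), of real_of_int] by (simp add: algebra_simps)
  have "real_of_int (2 * a + 1) \<le> sqrt (8 * real_of_int i + 1)"
  proof (rule real_le_rsqrt)
    have "(2 * a + 1)\<^sup>2 \<le> 4 * a * a + 4 * a + 8 * j + 1"
      using assms by (simp add: power2_eq_square algebra_simps)
    then show "(real_of_int (2 * a + 1))\<^sup>2 \<le> 8 * real_of_int i + 1"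
      unfolding i by (metis of_int_le_iff of_int_power)
  qed
  moreover have "sqrt (8 * real_of_int i + 1) < real_of_int (2 * a + 3)"
  proof (rule real_less_lsqrt)
    have "4 * a * a + 4 * a + 8 * j + 1 < (2 * a + 3)\<^sup>2"
      using assms by (simp add: power2_eq_square algebra_simps)
    then show "8 * real_of_int i + 1 < (real_of_int (2 * a + 3))\<^sup>2"
      unfolding i by (metis of_int_less_iff of_int_power)
  qed (use assms in simp)
  ultimately show ?thesis unfolding floor_eq_iff by simp
qed

lemma floor_phase3_index:
  fixes m g k t :: int
  assumes "1 \<le> g" "0 \<le> t" "t \<le> m - g" "2 * k = 2 * (g - 1) * (m + 1) - g * (g - 1) + 2 + 2 * t"
  shows "\<lfloor>real_of_int m - sqrt (real_of_int m * (real_of_int m + 1) - 2 * real_of_int k + 9 / 4) + 3 / 2\<rfloor> = g"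
proof -
  define r where "r = m - g"
  have radicand: "real_of_int m * (real_of_int m + 1) - 2 * real_of_int k + 9 / 4
      = real_of_int (r * r + 3 * r - 2 * t) + 9 / 4"
    using arg_cong[OF assms(4), of real_of_int] unfolding r_def by (simp add: algebra_simps)
  have "real_of_int r + 1 / 2 < sqrt (real_of_int (r * r + 3 * r - 2 * t) + 9 / 4)"
  proof (rule real_less_rsqrt)
    have "real_of_int (r * r + r) < real_of_int (r * r + 3 * r - 2 * t + 2)"
      using assms unfolding r_def by simp
    then show "(real_of_int r + 1 / 2)\<^sup>2 < real_of_int (r * r + 3 * r - 2 * t) + 9 / 4"
      by (simp add: power2_eq_square algebra_simps)
  qed
  moreover have "sqrt (real_of_int (r * r + 3 * r - 2 * t) + 9 / 4) \<le> real_of_int r + 3 / 2"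
  proof (rule real_le_lsqrt)
    have "real_of_int (r * r + 3 * r - 2 * t) \<le> real_of_int (r * r + 3 * r)"
      using assms by simp
    then show "real_of_int (r * r + 3 * r - 2 * t) + 9 / 4 \<le> (real_of_int r + 3 / 2)\<^sup>2"
      by (simp add: power2_eq_square algebra_simps)
  qed (use assms in \<open>simp add: r_def\<close>)
  moreover have "real_of_int m = real_of_int r + real_of_int g" unfolding r_def by simp
  ultimately show ?thesis unfolding floor_eq_iff radicand by simp
qed

lemma two_s1: "2 * s1 m = int m * (int m + 3)"
  unfolding s1_def by simp

lemma s1_nonneg: "0 \<le> s1 m"
  unfolding s1_def by simp

lemma xA_eq:
  assumes "0 \<le> j" "j \<le> a" "2 * i = a * (a + 1) + 2 * j"
  shows "xA n d i = int n + 1 - (-1) ^ nat a * d * (2 * j - a)"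
proof -
  have "i * 2 - a * (a + 2) = 2 * j - a" using assms(3) by (simp add: algebra_simps)
  then show ?thesis
    unfolding xA_def Let_def floor_inverse_triangular[OF assms] by (simp add: algebra_simps)
qed

lemma xA_s1: "xA n d (s1 m) = int n + 1 - (-1) ^ m * d * int m"
  using xA_eq[of "int m" "int m" "s1 m" n d] two_s1[of m] by (simp add: algebra_simps)

text \<open>The phase lemmas evaluate \<open>x\<^sub>i\<close> at move \<open>j\<close> (counting from \<open>0\<close>) of a sweep, written as
  the number of moves before that sweep plus \<open>1 + j\<close>.\<close>

lemma xC_phase1:
  assumes "k < m" "m \<le> n" "j \<le> Suc k"
  shows "xC n m d (int k * (int k + 3) div 2 + 1 + int j)
    = int n + 1 + (-1) ^ k * d * (2 * int j - int k - 1)"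
proof -
  let ?i = "int k * (int k + 3) div 2 + 1 + int j"
  have two_i: "2 * ?i = (int k + 1) * (int k + 1 + 1) + 2 * int j"
    by (simp add: algebra_simps)
  have "int (Suc k) * (int (Suc k) + 3) \<le> int m * (int m + 3)"
    using assms(1) by (intro mult_mono) auto
  then have "2 * ?i \<le> 2 * s1 m" unfolding two_s1 using assms(3) by (simp add: algebra_simps)
  moreover have "0 \<le> s2 n m" unfolding s2_def using assms(2) by simp
  ultimately have in_phase1: "?i \<le> s1 m" "?i \<le> s1 m + s2 n m" by simp_all
  have "xA n d ?i = int n + 1 - (-1) ^ nat (int k + 1) * d * (2 * int j - (int k + 1))"
    by (rule xA_eq[OF _ _ two_i]) (use assms(3) in simp_all)
  then show ?thesis
    unfolding xC_def xB_def if_P[OF in_phase1(1)] if_P[OF in_phase1(2)]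
    by (simp add: nat_add_distrib algebra_simps)
qed

lemma xC_phase2:
  assumes "b < n - m" "j \<le> m"
  shows "xC n m d (s1 m + int b * (int m + 1) + 1 + int j)
    = int n - int b - (-1) ^ (m + b) * d * int m + 2 * (-1) ^ (m + b) * d * int j"
proof -
  let ?i = "s1 m + int b * (int m + 1) + 1 + int j"
  have "int b * (int m + 1) + 1 + int j \<le> (int b + 1) * (int m + 1)"
    using assms(2) by (simp add: algebra_simps)
  also have "\<dots> \<le> s2 n m" unfolding s2_def using assms(1) by (intro mult_right_mono) auto
  finally have in_phase2: "\<not> ?i \<le> s1 m" "?i \<le> s1 m + s2 n m"
    using zero_le_mult_iff[of "int b" "int m + 1"] by linarith+
  have dividend: "?i - s1 m + int m = int j + (int b + 1) * (int m + 1)" by (simp add: algebra_simps)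
  have \<beta>: "(?i - s1 m + int m) div (int m + 1) = int b + 1"
    unfolding dividend using assms(2) by simp
  have p: "?i - s1 m - (int b + 1 - 1) * (int m + 1) = int j + 1" by simp
  have "nat (int m + (int b + 1)) = Suc (m + b)" "nat (int b + 1) = Suc b" by auto
  then show ?thesis
    unfolding xC_def xB_def Let_def \<beta> p xA_s1 using in_phase2
    by (cases "even b") (simp_all add: algebra_simps power_add)
qed

lemma xB_end:
  assumes "m \<le> n"
  shows "xB n m d (s1 m + s2 n m) = int m + 1 - (-1) ^ n * d * int m"
proof (cases "n = m")
  case True
  then show ?thesis unfolding xB_def s2_def using xA_s1[of m d m] by simp
next
  case False
  then obtain b where n: "n = m + Suc b" using assms by (metis le_iff_add not0_implies_Suc add_0_right)
  have idx: "s1 m + s2 n m = s1 m + int b * (int m + 1) + 1 + int m"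
    unfolding s2_def n by (simp add: algebra_simps)
  have "xB n m d (s1 m + s2 n m) = xC n m d (s1 m + s2 n m)"
    unfolding xC_def by simp
  also have "\<dots> = int n - int b - (-1) ^ (m + b) * d * int m + 2 * (-1) ^ (m + b) * d * int m"
    unfolding idx by (rule xC_phase2) (simp_all add: n)
  also have "\<dots> = int m + 1 - (-1) ^ n * d * int m"
    unfolding n by simp
  finally show ?thesis .
qed

lemma xC_phase3:
  assumes "c < m" "m \<le> n" "j \<le> m - Suc c"
  shows "xC n m d (s1 m + s2 n m + int c * (int m + 1) - int c * (int c + 1) div 2 + 1 + int j)
    = int m + 1 - (-1) ^ (n + c) * d * (int m - int c - 1) + 2 * (-1) ^ (n + c) * d * int j"
proof -
  let ?i = "s1 m + s2 n m + int c * (int m + 1) - int c * (int c + 1) div 2 + 1 + int j"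
  let ?k = "?i - s1 m - s2 n m"
  have two_k: "2 * ?k = 2 * int c * (int m + 1) - int c * (int c + 1) + 2 + 2 * int j"
    by (simp add: algebra_simps)
  have "0 \<le> int c * (2 * int m + 1 - int c)" using assms(1) by simp
  then have in_phase3: "\<not> ?i \<le> s1 m + s2 n m" using two_k by (simp add: algebra_simps)
  have \<gamma>: "\<lfloor>real m - sqrt (real m * (real m + 1) - 2 * real_of_int ?k + 9 / 4) + 3 / 2\<rfloor> = int c + 1"
    using floor_phase3_index[of "int c + 1" "int j" "int m" ?k] assms two_k
    by (simp add: algebra_simps)
  have q: "?k - (int c + 1 - 1) * (int m + 1) + (int c + 1) * (int c + 1 - 1) div 2 = int j + 1"
    by (simp add: algebra_simps)
  have "nat (int n + (int c + 1)) = Suc (n + c)" by simp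
  then show ?thesis
    unfolding xC_def Let_def \<gamma> q xB_end[OF assms(2)] if_not_P[OF in_phase3]
    by (simp add: algebra_simps)
qed

lemma neg_one_power_cases: "d = 1 \<or> d = -1 \<Longrightarrow> (-1::int) ^ k * d = 1 \<or> (-1::int) ^ k * d = -1"
  by (cases "even k") auto

lemma reaches_phase1:
  assumes "k \<le> m" "m \<le> n" "d = 1 \<or> d = -1"
  shows "reaches (int n + int m + 1) (init_conf n m) (map (xC n m d) [1..int k * (int k + 3) div 2])
    (block (int n + int m + 1) (int n + 1 - int k) (int k) ((-1) ^ k * d = 1) Black White)"
  using assms(1)
proof (induction k)
  case 0
  then show ?case using init_conf_block by simp
next
  case (Suc k)
  let ?L = "int n + int m + 1" and ?A = "int k * (int k + 3) div 2"
  define e where "e = (-1::int) ^ k * d"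
  have "reaches ?L (init_conf n m) (map (xC n m d) [1..?A + 1 + int (Suc k)])
    (block ?L (int n + 1 - int k - 1) (int k + 1) (e = -1) Black White)"
  proof (rule reaches_upto_extend)
    show "reaches ?L (init_conf n m) (map (xC n m d) [1..?A])
      (block ?L (int n + 1 - int k) (int k) (e = 1) Black White)"
      using Suc by (simp add: e_def)
    show "xC n m d (?A + 1 + int j) = int n + 1 - e * (int k + 1) + 2 * e * int j" if "j \<le> Suc k" for j
      using xC_phase1[OF _ assms(2) that] Suc.prems by (simp add: e_def algebra_simps)
    show "reaches ?L (block ?L (int n + 1 - int k) (int k) (e = 1) Black White)
      (sweep (int n + 1 - e * (int k + 1)) e (Suc k)) (block ?L (int n + 1 - int k - 1) (int k + 1) (e = -1) Black White)"
      using reaches_block_grow[of "int n + 1 - int k" "int k" ?L e] Suc.prems assms(2)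
        neg_one_power_cases[OF assms(3), of k]
      by (simp add: e_def nat_add_distrib)
  qed simp
  moreover have "int (Suc k) * (int (Suc k) + 3) div 2 = ?A + 1 + int (Suc k)"
    by (simp add: algebra_simps)
  moreover have "(e = -1) \<longleftrightarrow> (-1) ^ Suc k * d = 1" unfolding e_def by auto
  ultimately show ?case by (simp add: algebra_simps)
qed

lemma reaches_phase2:
  assumes "b \<le> n - m" "m \<le> n" "d = 1 \<or> d = -1"
  shows "reaches (int n + int m + 1) (init_conf n m) (map (xC n m d) [1..s1 m + int b * (int m + 1)])
    (block (int n + int m + 1) (int n + 1 - int m - int b) (int m) ((-1) ^ (m + b) * d = 1) Black Black)"
  using assms(1)
proof (induction b)
  case 0
  have "block (int n + int m + 1) (int n + 1 - int m) (int m) vl Black White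
      = block (int n + int m + 1) (int n + 1 - int m) (int m) vl Black Black" for vl
    by (rule block_right_end) simp
  then show ?case using reaches_phase1[of m m n d] assms(2,3) by (simp add: s1_def)
next
  case (Suc b)
  let ?L = "int n + int m + 1" and ?A = "s1 m + int b * (int m + 1)"
  define e where "e = (-1::int) ^ (m + b) * d"
  have "reaches ?L (init_conf n m) (map (xC n m d) [1..?A + 1 + int m])
    (block ?L (int n + 1 - int m - int b - 1) (int m) (e = -1) Black Black)"
  proof (rule reaches_upto_extend)
    show "reaches ?L (init_conf n m) (map (xC n m d) [1..?A])
      (block ?L (int n + 1 - int m - int b) (int m) (e = 1) Black Black)"
      using Suc by (simp add: e_def)
    show "0 \<le> ?A" using s1_nonneg[of m] by simp
    show "xC n m d (?A + 1 + int j) = int n - int b - e * int m + 2 * e * int j" if "j \<le> m" for j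
      using xC_phase2[of b n m j d] Suc.prems that by (simp add: e_def)
    show "reaches ?L (block ?L (int n + 1 - int m - int b) (int m) (e = 1) Black Black)
      (sweep (int n - int b - e * int m) e m) (block ?L (int n + 1 - int m - int b - 1) (int m) (e = -1) Black Black)"
      using reaches_block_shift[of "int n + 1 - int m - int b" "int m" ?L e] Suc.prems
        neg_one_power_cases[OF assms(3), of "m + b"]
      by (simp add: e_def algebra_simps)
  qed
  moreover have "(e = -1) \<longleftrightarrow> (-1) ^ (m + Suc b) * d = 1" unfolding e_def by auto
  ultimately show ?case by (simp add: algebra_simps)
qed

lemma reaches_phase3:
  assumes "c \<le> m" "m \<le> n" "d = 1 \<or> d = -1"
  shows "reaches (int n + int m + 1) (init_conf n m)
    (map (xC n m d) [1..s1 m + s2 n m + int c * (int m + 1) - int c * (int c + 1) div 2])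
    (block (int n + int m + 1) (1 + int c) (int m - int c) ((-1) ^ (n + c) * d = 1) White Black)"
  using assms(1)
proof (induction c)
  case 0
  have "s2 n m = int (n - m) * (int m + 1)" "int n + 1 - int m - int (n - m) = 1" "m + (n - m) = n"
    unfolding s2_def using assms(2) by auto
  moreover have "block L 1 k vl Black Black = block L 1 k vl White Black" for L k vl
    by (rule block_left_end) simp
  ultimately show ?case using reaches_phase2[of "n - m" n m d] assms(2,3) by simp
next
  case (Suc c)
  let ?L = "int n + int m + 1" and ?A = "s1 m + s2 n m + int c * (int m + 1) - int c * (int c + 1) div 2"
  define e where "e = (-1::int) ^ (n + c) * d"
  have run: "reaches ?L (init_conf n m) (map (xC n m d) [1..?A + 1 + int (m - Suc c)])
    (block ?L (1 + int c + 1) (int m - int c - 1) (e = -1) White Black)"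
  proof (rule reaches_upto_extend)
    show "reaches ?L (init_conf n m) (map (xC n m d) [1..?A])
      (block ?L (1 + int c) (int m - int c) (e = 1) White Black)"
      using Suc by (simp add: e_def)
    have "0 \<le> int c * (2 * int m + 1 - int c)" "0 \<le> s1 m" "0 \<le> s2 n m"
      using Suc.prems assms(2) s1_nonneg[of m] unfolding s2_def by auto
    then show "0 \<le> ?A" by (simp add: algebra_simps)
    show "xC n m d (?A + 1 + int j) = int m + 1 - e * (int m - int c - 1) + 2 * e * int j"
      if "j \<le> m - Suc c" for j
      using xC_phase3[of c m n j d] Suc.prems assms(2) that by (simp add: e_def)
    show "reaches ?L (block ?L (1 + int c) (int m - int c) (e = 1) White Black)
      (sweep (int m + 1 - e * (int m - int c - 1)) e (m - Suc c))
      (block ?L (1 + int c + 1) (int m - int c - 1) (e = -1) White Black)"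
    proof -
      have "nat (int m - int c - 1) = m - Suc c" by simp
      moreover have "e = 1 \<or> e = -1" unfolding e_def by (rule neg_one_power_cases[OF assms(3)])
      ultimately show ?thesis
        using reaches_block_shrink[of "1 + int c" "int m - int c" ?L e] Suc.prems assms(2)
        by (simp add: algebra_simps)
    qed
  qed
  have idx: "s1 m + s2 n m + int (Suc c) * (int m + 1) - int (Suc c) * (int (Suc c) + 1) div 2
      = ?A + 1 + int (m - Suc c)"
    using Suc.prems by (simp add: algebra_simps of_nat_diff)
  have sign: "(e = -1) \<longleftrightarrow> (-1) ^ (n + Suc c) * d = 1" unfolding e_def by auto
  have "1 + int (Suc c) = 1 + int c + 1" "int m - int (Suc c) = int m - int c - 1" by simp_all
  then show ?case unfolding idx sign[symmetric] by (simp only: run)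
qed

lemma reaches_final:
  assumes "m \<le> n" "d = 1 \<or> d = -1"
  shows "reaches (int n + int m + 1) (init_conf n m) (move_seq n m d) (final_conf n m)"
proof -
  have "s1 m + s2 n m + int m * (int m + 1) - int m * (int m + 1) div 2 = int (n * m + n + m)"
    using two_s1[of m] assms(1) unfolding s2_def by (simp add: algebra_simps)
  moreover have "block (int n + int m + 1) (1 + int m) 0 vl White Black = final_conf n m" for vl
    using final_conf_block[of n m vl] by (simp add: add.commute)
  ultimately show ?thesis
    using reaches_phase3[of m m n d] assms unfolding move_seq_def by simp
qed

lemma hd_move_seq:
  assumes "1 \<le> m" "m \<le> n"
  shows "hd (move_seq n m d) = int n + 1 - d"
proof -
  have "[1..int (n * m + n + m)] = 1 # [1 + 1..int (n * m + n + m)]"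
    by (rule upto_rec1) (use assms(1) in \<open>simp add: add_increasing\<close>)
  then show ?thesis
    unfolding move_seq_def using xC_phase1[of 0 m n 0 d] assms by simp
qed

section \<open>Optimality\<close>

fun weight :: "cell \<Rightarrow> int" where
  "weight Black = 1" | "weight White = -1" | "weight Empty = 0"

definition moment :: "int \<Rightarrow> config \<Rightarrow> int" where
  "moment L c = (\<Sum>p\<in>{1..L}. weight (c p) * p)"

definition squeeze :: "config \<Rightarrow> int \<Rightarrow> int \<Rightarrow> cell" where
  "squeeze c v i = c (if i < v then i else i + 1)"

definition is_last :: "(int \<Rightarrow> cell) \<Rightarrow> cell \<Rightarrow> int \<Rightarrow> int \<Rightarrow> bool" where
  "is_last f col N M \<longleftrightarrow> 1 \<le> M \<and> M \<le> N \<and> f M = col \<and> (\<forall>i. M < i \<and> i \<le> N \<longrightarrow> f i \<noteq> col)"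

definition last_pos :: "(int \<Rightarrow> cell) \<Rightarrow> cell \<Rightarrow> int \<Rightarrow> int" where
  "last_pos f col N = Max {i. 1 \<le> i \<and> i \<le> N \<and> f i = col}"

definition parity_bump :: "int \<Rightarrow> int \<Rightarrow> int \<Rightarrow> int" where
  "parity_bump k N i = (if odd (i - k) \<and> i < N then i + 1 else i)"

text \<open>A slide leaves the squeezed word unchanged and moves the vacancy by one, while a jump
  transposes two adjacent letters of the squeezed word without changing the parity of the vacancy.
  Rounding the last positions of the two colours to a parity fixed by the vacancy makes \<open>gap\<close>
  blind to jumps and lets a slide raise it by at most one.\<close>
definition gap :: "int \<Rightarrow> config \<Rightarrow> int \<Rightarrow> int" where
  "gap L c v = parity_bump (v - 1) (L - 1) (last_pos (squeeze c v) Black (L - 1))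
     - parity_bump (v - 1) (L - 1) (last_pos (squeeze c v) White (L - 1))"

definition potential :: "int \<Rightarrow> config \<Rightarrow> int \<Rightarrow> int" where
  "potential L c v = moment L c + gap L c v"

definition two_coloured :: "int \<Rightarrow> config \<Rightarrow> int \<Rightarrow> bool" where
  "two_coloured L c v \<longleftrightarrow> single_vacancy L c v
     \<and> (\<exists>i. 1 \<le> i \<and> i \<le> L - 1 \<and> squeeze c v i = Black)
     \<and> (\<exists>i. 1 \<le> i \<and> i \<le> L - 1 \<and> squeeze c v i = White)"

definition swap_adj :: "int \<Rightarrow> int \<Rightarrow> int" where
  "swap_adj a i = (if i = a then a + 1 else if i = a + 1 then a else i)"

lemma last_pos_eq: "is_last f col N M \<Longrightarrow> last_pos f col N = M"
  unfolding last_pos_def is_last_def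
  by (rule Max_eqI) (auto intro: finite_subset[of _ "{1..N}"] simp: not_le[symmetric])

lemma is_last_last_pos:
  assumes "\<exists>i. 1 \<le> i \<and> i \<le> N \<and> f i = col"
  shows "is_last f col N (last_pos f col N)"
proof -
  let ?S = "{i. 1 \<le> i \<and> i \<le> N \<and> f i = col}"
  have fin: "finite ?S" by (rule finite_subset[of _ "{1..N}"]) auto
  have ge: "\<And>i. i \<in> ?S \<Longrightarrow> i \<le> Max ?S" using Max_ge[OF fin] .
  have "?S \<noteq> {}" using assms by auto
  then have "Max ?S \<in> ?S" using Max_in[OF fin] by blast
  then have M: "1 \<le> Max ?S" "Max ?S \<le> N" "f (Max ?S) = col" by auto
  moreover have "\<forall>i. Max ?S < i \<and> i \<le> N \<longrightarrow> f i \<noteq> col"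
  proof (intro allI impI notI)
    fix i assume i: "Max ?S < i \<and> i \<le> N" "f i = col"
    then have "i \<in> ?S" using M by auto
    then show False using ge i by fastforce
  qed
  ultimately show ?thesis unfolding is_last_def last_pos_def by blast
qed

lemma last_pos_swap_adj:
  assumes M: "is_last f col N M" and a: "1 \<le> a" "a + 1 \<le> N" and u: "u a = u (a + 1)"
  shows "u (last_pos (\<lambda>i. f (swap_adj a i)) col N) = u (last_pos f col N)"
proof -
  have M': "1 \<le> M" "M \<le> N" "f M = col" "\<And>i. M < i \<Longrightarrow> i \<le> N \<Longrightarrow> f i \<noteq> col"
    using M unfolding is_last_def by auto
  have "\<exists>M'. is_last (\<lambda>i. f (swap_adj a i)) col N M' \<and> u M' = u M"
  proof -
    consider "M < a \<or> a + 1 < M" | "M = a" | "M = a + 1" "f a = col" | "M = a + 1" "f a \<noteq> col"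
      by linarith
    then show ?thesis
    proof cases
      case 1
      then have "is_last (\<lambda>i. f (swap_adj a i)) col N M"
        using M' a unfolding is_last_def swap_adj_def by auto
      then show ?thesis by blast
    next
      case 2
      then have "is_last (\<lambda>i. f (swap_adj a i)) col N (a + 1)"
        using M' a unfolding is_last_def swap_adj_def by auto
      then show ?thesis using u 2 by auto
    next
      case 3
      then have "is_last (\<lambda>i. f (swap_adj a i)) col N (a + 1)"
        using M' a unfolding is_last_def swap_adj_def by auto
      then show ?thesis using 3 by auto
    next
      case 4
      then have "is_last (\<lambda>i. f (swap_adj a i)) col N a"
        using M' a unfolding is_last_def swap_adj_def by auto
      then show ?thesis using u 4 by auto
    qed
  qed
  then show ?thesis using last_pos_eq M by metis
qed

lemma squeeze_slide:
  assumes "single_vacancy L c v" "\<bar>x - v\<bar> = 1" "1 \<le> x" "x \<le> L"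
  shows "squeeze (apply_move L c x) x = squeeze c v"
proof -
  from assms(2) consider "x = v + 1" | "x = v - 1" by linarith
  then show ?thesis
    using assms unfolding apply_move_eq[OF assms(1)] single_vacancy_def squeeze_def fun_eq_iff
    by cases auto
qed

lemma squeeze_jump:
  assumes "single_vacancy L c v" "\<bar>x - v\<bar> = 2" "1 \<le> x" "x \<le> L"
  shows "squeeze (apply_move L c x) x = (\<lambda>i. squeeze c v (swap_adj (min x v) i))"
proof -
  from assms(2) consider "x = v + 2" | "x = v - 2" by linarith
  then show ?thesis
    using assms unfolding apply_move_eq[OF assms(1)] single_vacancy_def squeeze_def swap_adj_def fun_eq_iff
    by cases (auto simp: add.commute)
qed

lemma squeeze_not_Empty: "single_vacancy L c v \<Longrightarrow> 1 \<le> i \<Longrightarrow> i \<le> L - 1 \<Longrightarrow> squeeze c v i \<noteq> Empty"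
  unfolding single_vacancy_def squeeze_def by auto

lemma moment_apply_move:
  assumes "single_vacancy L c v" "1 \<le> x" "x \<le> L" "x \<noteq> v"
  shows "moment L (apply_move L c x) = moment L c + weight (c x) * (v - x)"
proof -
  have v: "c v = Empty" "1 \<le> v" "v \<le> L" using assms(1) unfolding single_vacancy_def by auto
  have "moment L (apply_move L c x) = (\<Sum>p\<in>{1..L}. weight (c p) * p
      + (if p = v then weight (c x) * v else 0) - (if p = x then weight (c x) * x else 0))"
    unfolding moment_def apply_move_eq[OF assms(1)] by (rule sum.cong) (use v assms(4) in auto)
  also have "\<dots> = moment L c + weight (c x) * v - weight (c x) * x"
    unfolding moment_def sum.distrib sum_subtractf using v assms by (simp add: sum.delta)
  finally show ?thesis by (simp add: algebra_simps)
qed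

lemma weight_mult_le_abs: "weight z * y \<le> \<bar>y\<bar>"
  by (cases z) auto

lemma parity_bump_cases: "parity_bump k N i = i \<or> (parity_bump k N i = i + 1 \<and> i < N)"
  unfolding parity_bump_def by auto

text \<open>If both last positions moved up, the letter after the last \<open>b\<close> would be a \<open>w\<close> and the
  letter after the last \<open>w\<close> a \<open>b\<close>, which is impossible.\<close>
lemma parity_bump_difference_le:
  assumes full: "\<And>i. 1 \<le> i \<Longrightarrow> i \<le> N \<Longrightarrow> f i \<noteq> Empty"
    and B: "is_last f Black N MB" and W: "is_last f White N MW"
  shows "(parity_bump k' N MB - parity_bump k N MB) - (parity_bump k' N MW - parity_bump k N MW) \<le> 1"
proof -
  have next_B: "f (MB + 1) = White" if "MB < N"
    using B that full[of "MB + 1"] unfolding is_last_def by (cases "f (MB + 1)") auto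
  have next_W: "f (MW + 1) = Black" if "MW < N"
    using W that full[of "MW + 1"] unfolding is_last_def by (cases "f (MW + 1)") auto
  have "\<not> (MB < N \<and> MW < N)"
  proof
    assume both: "MB < N \<and> MW < N"
    then have "\<not> MW < MB + 1" "\<not> MB < MW + 1"
      using B W next_B next_W unfolding is_last_def by auto
    then show False by simp
  qed
  then show ?thesis
    using parity_bump_cases[of k' N MB] parity_bump_cases[of k N MB]
      parity_bump_cases[of k' N MW] parity_bump_cases[of k N MW] by auto
qed

lemma potential_move:
  assumes g: "two_coloured L c v" and lm: "legal_move L c x"
  shows "two_coloured L (apply_move L c x) x \<and> potential L (apply_move L c x) x \<le> potential L c v + 2"
proof -
  let ?c = "apply_move L c x" and ?f = "squeeze c v" and ?N = "L - 1"
  have vac: "single_vacancy L c v" using g unfolding two_coloured_def by simp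
  have x: "1 \<le> x" "x \<le> L" "\<bar>x - v\<bar> = 1 \<or> \<bar>x - v\<bar> = 2"
    using lm unfolding legal_move_def Let_def vacancy_eq[OF vac] by auto
  have v: "1 \<le> v" "v \<le> L" using vac unfolding single_vacancy_def by auto
  have vac': "single_vacancy L ?c x" using single_vacancy_apply_move[OF vac x(1,2)] x(3) by auto
  have moment: "moment L ?c \<le> moment L c + \<bar>x - v\<bar>"
    using moment_apply_move[OF vac x(1,2)] weight_mult_le_abs[of "c x" "v - x"] x(3) by auto
  have exB: "\<exists>i. 1 \<le> i \<and> i \<le> ?N \<and> ?f i = Black" and exW: "\<exists>i. 1 \<le> i \<and> i \<le> ?N \<and> ?f i = White"
    using g unfolding two_coloured_def by auto
  note lastB = is_last_last_pos[OF exB] and lastW = is_last_last_pos[OF exW]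
  from x(3) show ?thesis
  proof
    assume slide: "\<bar>x - v\<bar> = 1"
    have sq: "squeeze ?c x = ?f" using squeeze_slide[OF vac slide x(1,2)] .
    have "gap L ?c x \<le> gap L c v + 1"
      using parity_bump_difference_le[OF squeeze_not_Empty[OF vac] lastB lastW, of "x - 1" "v - 1"]
      unfolding gap_def sq by simp
    moreover have "two_coloured L ?c x" unfolding two_coloured_def sq using vac' exB exW by simp
    ultimately show ?thesis using moment slide unfolding potential_def by simp
  next
    assume jump: "\<bar>x - v\<bar> = 2"
    let ?a = "min x v"
    have sq: "squeeze ?c x = (\<lambda>i. ?f (swap_adj ?a i))" using squeeze_jump[OF vac jump x(1,2)] .
    have a: "1 \<le> ?a" "?a + 1 \<le> ?N" using jump x v by auto
    have xv: "x = v + 2 \<or> x = v - 2" using jump by auto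
    then have bump: "parity_bump (x - 1) ?N = parity_bump (v - 1) ?N"
      by (auto simp: parity_bump_def fun_eq_iff; presburger)
    have adj: "parity_bump (v - 1) ?N ?a = parity_bump (v - 1) ?N (?a + 1)"
      using xv x v by (auto simp: parity_bump_def)
    have "gap L ?c x = gap L c v"
      unfolding gap_def sq bump using last_pos_swap_adj[OF lastB a adj] last_pos_swap_adj[OF lastW a adj]
      by simp
    moreover have "two_coloured L ?c x"
      unfolding two_coloured_def sq
    proof (intro conjI vac')
      have swap_back: "swap_adj ?a (swap_adj ?a i) = i" "1 \<le> swap_adj ?a i \<and> swap_adj ?a i \<le> ?N"
        if "1 \<le> i" "i \<le> ?N" for i
        using that a unfolding swap_adj_def by auto
      show "\<exists>i. 1 \<le> i \<and> i \<le> ?N \<and> ?f (swap_adj ?a i) = Black"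
        using exB swap_back by metis
      show "\<exists>i. 1 \<le> i \<and> i \<le> ?N \<and> ?f (swap_adj ?a i) = White"
        using exW swap_back by metis
    qed
    ultimately show ?thesis using moment jump unfolding potential_def by simp
  qed
qed

lemma potential_run:
  "two_coloured L c v \<Longrightarrow> legal_seq L c xs \<Longrightarrow>
    \<exists>v'. two_coloured L (run_moves L c xs) v' \<and> potential L (run_moves L c xs) v' \<le> potential L c v + 2 * int (length xs)"
proof (induction xs arbitrary: c v)
  case (Cons x xs)
  then have "legal_move L c x" "legal_seq L (apply_move L c x) xs" by auto
  with Cons.IH potential_move[OF Cons.prems(1)] show ?case
    unfolding run_moves_Cons by fastforce
qed auto

lemma double_sum_interval_int:
  fixes a b :: int
  assumes "a \<le> b + 1"
  shows "2 * (\<Sum>p\<in>{a..b}. p) = b * (b + 1) - a * (a - 1)"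
  using assms
proof (induction "nat (b + 1 - a)" arbitrary: b)
  case (Suc k)
  then have "{a..b} = insert b {a..b - 1}" "2 * (\<Sum>p\<in>{a..b - 1}. p) = (b - 1) * b - a * (a - 1)"
    by auto
  then show ?case by (simp add: algebra_simps)
qed simp

lemma moment_block_empty:
  assumes "1 \<le> b" "b \<le> L"
  shows "2 * moment L (block L b 0 vl X Y) = weight X * ((b - 1) * b) + weight Y * (L * (L + 1) - (b + 1) * b)"
proof -
  let ?c = "block L b 0 vl X Y"
  have split: "{1..L} = {1..b - 1} \<union> insert b {b + 1..L}" using assms by auto
  have "moment L ?c = (\<Sum>p\<in>{1..b - 1}. weight (?c p) * p) + (weight (?c b) * b
      + (\<Sum>p\<in>{b + 1..L}. weight (?c p) * p))"
    unfolding moment_def split by (subst sum.union_disjoint) auto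
  also have "\<dots> = weight X * (\<Sum>p\<in>{1..b - 1}. p) + weight Y * (\<Sum>p\<in>{b + 1..L}. p)"
    unfolding sum_distrib_left using assms by (auto simp: block_def intro!: sum.cong)
  finally have "2 * moment L ?c
      = weight X * (2 * (\<Sum>p\<in>{1..b - 1}. p)) + weight Y * (2 * (\<Sum>p\<in>{b + 1..L}. p))"
    by (simp add: algebra_simps)
  moreover have "2 * (\<Sum>p\<in>{1..b - 1}. p) = (b - 1) * b"
    using double_sum_interval_int[of 1 "b - 1"] assms by (simp add: algebra_simps)
  moreover have "2 * (\<Sum>p\<in>{b + 1..L}. p) = L * (L + 1) - (b + 1) * b"
    using double_sum_interval_int[of "b + 1" L] assms by (simp add: algebra_simps)
  ultimately show ?thesis by simp
qed

lemma squeeze_block_empty: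
  assumes "1 \<le> b" "b \<le> L"
  shows "squeeze (block L b 0 vl X Y) b = (\<lambda>i. if i < 1 \<or> L - 1 < i then Empty else if i < b then X else Y)"
  using assms unfolding squeeze_def block_def fun_eq_iff by auto

lemma gap_block_empty:
  assumes "2 \<le> b" "b < L" "X = Black \<and> Y = White \<or> X = White \<and> Y = Black"
  shows "gap L (block L b 0 vl X Y) b = weight X * (b - L)"
proof -
  have sq: "squeeze (block L b 0 vl X Y) b = (\<lambda>i. if i < 1 \<or> L - 1 < i then Empty else if i < b then X else Y)"
    using squeeze_block_empty assms by simp
  have "is_last (squeeze (block L b 0 vl X Y) b) X (L - 1) (b - 1)"
    "is_last (squeeze (block L b 0 vl X Y) b) Y (L - 1) (L - 1)"
    using assms unfolding sq is_last_def by auto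
  then show ?thesis
    using assms unfolding gap_def by (auto simp: last_pos_eq parity_bump_def)
qed

lemma two_coloured_block_empty:
  assumes "2 \<le> b" "b < L" "X = Black \<and> Y = White \<or> X = White \<and> Y = Black"
  shows "two_coloured L (block L b 0 vl X Y) b"
proof -
  let ?f = "squeeze (block L b 0 vl X Y) b"
  have sq: "?f = (\<lambda>i. if i < 1 \<or> L - 1 < i then Empty else if i < b then X else Y)"
    using squeeze_block_empty assms by simp
  have ends: "?f (b - 1) = X" "?f (L - 1) = Y" "1 \<le> b - 1" "b - 1 \<le> L - 1" "1 \<le> L - 1"
    using assms unfolding sq by auto
  have "single_vacancy L (block L b 0 vl X Y) b"
    using assms single_vacancy_block[of b 0 L X Y vl] by (cases vl) auto
  moreover have "\<exists>i. 1 \<le> i \<and> i \<le> L - 1 \<and> ?f i = col" if "col = X \<or> col = Y" for col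
    using that ends by blast
  ultimately show ?thesis unfolding two_coloured_def using assms(3) by auto
qed

lemma length_ge_if_reaches_final:
  assumes "1 \<le> m" "m \<le> n" "reaches (int n + int m + 1) (init_conf n m) xs (final_conf n m)"
  shows "n * m + n + m \<le> length xs"
proof -
  let ?L = "int n + int m + 1"
  have start: "two_coloured ?L (init_conf n m) (int n + 1)"
    using two_coloured_block_empty[of "int n + 1" ?L Black White] assms(1,2) init_conf_block by simp
  then obtain v where "two_coloured ?L (final_conf n m) v" and potential:
      "potential ?L (final_conf n m) v \<le> potential ?L (init_conf n m) (int n + 1) + 2 * int (length xs)"
    using potential_run[OF start, of xs] assms(3) unfolding reaches_def by auto
  moreover have "single_vacancy ?L (final_conf n m) (int m + 1)"
    using single_vacancy_block[of "int m + 1" 0 ?L White Black True] final_conf_block by simp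
  ultimately have "v = int m + 1" unfolding two_coloured_def single_vacancy_def by auto
  moreover have "2 * moment ?L (init_conf n m) = int n * (int n + 1) - (?L * (?L + 1) - (int n + 2) * (int n + 1))"
    "gap ?L (init_conf n m) (int n + 1) = - int m"
    using moment_block_empty[of "int n + 1" ?L] gap_block_empty[of "int n + 1" ?L Black White]
      init_conf_block[of n m True] assms(1,2) by (simp_all add: algebra_simps)
  moreover have "2 * moment ?L (final_conf n m) = - (int m * (int m + 1)) + (?L * (?L + 1) - (int m + 2) * (int m + 1))"
    "gap ?L (final_conf n m) (int m + 1) = int n"
    using moment_block_empty[of "int m + 1" ?L] gap_block_empty[of "int m + 1" ?L White Black]
      final_conf_block[of n m True] assms(1,2) by (simp_all add: algebra_simps)
  ultimately have "int (n * m + n + m) \<le> int (length xs)"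
    using potential unfolding potential_def by (simp add: algebra_simps)
  then show ?thesis by linarith
qed

theorem theorem3:
  fixes n m :: nat and d :: int
  assumes "1 \<le> m" and "m \<le> n" and "d \<in> {1, -1}"
  defines "L \<equiv> int n + int m + 1"
  shows "length (move_seq n m d) = n * m + n + m
    \<and> legal_seq L (init_conf n m) (move_seq n m d)
    \<and> run_moves L (init_conf n m) (move_seq n m d) = final_conf n m
    \<and> (\<forall>xs. legal_seq L (init_conf n m) xs \<and> run_moves L (init_conf n m) xs = final_conf n m
            \<longrightarrow> n * m + n + m \<le> length xs)
    \<and> d = int n + 1 - hd (move_seq n m d)"
proof -
  have d: "d = 1 \<or> d = -1" using assms(3) by auto
  have "length (move_seq n m d) = n * m + n + m"
    unfolding move_seq_def by (metis diff_add_cancel length_map length_upto nat_int)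
  moreover have "reaches L (init_conf n m) (move_seq n m d) (final_conf n m)"
    unfolding L_def using reaches_final[OF assms(2) d] .
  moreover have "n * m + n + m \<le> length xs" if "reaches L (init_conf n m) xs (final_conf n m)" for xs
    using length_ge_if_reaches_final[OF assms(1,2)] that unfolding L_def .
  moreover have "hd (move_seq n m d) = int n + 1 - d" using hd_move_seq[OF assms(1,2)] .
  ultimately show ?thesis unfolding reaches_def by auto
qed

end
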